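(* Let $m,n\ge0$. The element $t$ is invertible in the ring $U^{\pm}_{m,n}$.
   Context: $U^{\pm}_{m,n}$ is the commutative ring generated over $\mathbb Z$ by $u_1,u_2,\dots$, $v_1,v_2,\dots$ and $t$, with conventions $u_0=v_0=1$ and $u_i=v_i=0$ for $i<0$, subject to the relations $R_I(w)=0$ for all $I=(i_1,\dots,i_{m+1})\in\mathbb Z^{m+1}$, where $w_i=u_i-tv_{-i-m+n}$ ($i\in\mathbb Z$) and $R_I(w)=\det(w_{i_\alpha+\beta-1})_{1\le\alpha,\beta\le m+1}$. *)

theory Defs
  imports "HOL-Library.Poly_Mapping" "Jordan_Normal_Form.Determinant"
begin

text \<open>Variables of the polynomial ring: U k stands for u_(k+1), V k for v_(k+1), T for t.\<close>
datatype var = U nat | V nat | T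

type_synonym ipoly = "(var \<Rightarrow>\<^sub>0 nat) \<Rightarrow>\<^sub>0 int"

definition Var :: "var \<Rightarrow> ipoly" where
  "Var x = Poly_Mapping.single (Poly_Mapping.single x 1) 1"

definition uu :: "int \<Rightarrow> ipoly" where
  "uu i = (if i = 0 then 1 else if i < 0 then 0 else Var (U (nat (i - 1))))"

definition vv :: "int \<Rightarrow> ipoly" where
  "vv i = (if i = 0 then 1 else if i < 0 then 0 else Var (V (nat (i - 1))))"

definition ww :: "nat \<Rightarrow> nat \<Rightarrow> int \<Rightarrow> ipoly" where
  "ww m n i = uu i - Var T * vv (- i - int m + int n)"

text \<open>R_I(w) = det (w_(i_alpha + beta - 1)), 1 <= alpha, beta <= m+1 (written 0-indexed).\<close>
definition RR :: "nat \<Rightarrow> nat \<Rightarrow> (nat \<Rightarrow> int) \<Rightarrow> ipoly" where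
  "RR m n I = det (mat (m + 1) (m + 1) (\<lambda>(a, b). ww m n (I a + int b)))"

definition gen_ideal :: "'a::comm_ring_1 set \<Rightarrow> 'a set" where
  "gen_ideal S = {x. \<exists>F c. finite F \<and> F \<subseteq> S \<and> x = (\<Sum>g\<in>F. c g * g)}"

definition rel_ideal :: "nat \<Rightarrow> nat \<Rightarrow> ipoly set" where
  "rel_ideal m n = gen_ideal (range (RR m n))"

end

theory Submission
  imports Defs
begin

text \<open>Take the index I = (0, -1, ..., -m). Modulo t the matrix (w_(i_alpha + beta - 1)) becomes
  (u_(beta - alpha)), which is upper unitriangular because u_0 = 1 and u_i = 0 for i < 0.
  Since the determinant is a polynomial in the entries, R_I(w) is congruent to 1 modulo t,
  i.e. R_I(w) = 1 + t c, and then t (-c) - 1 = - R_I(w) lies in the ideal of relations.\<close>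

lemma dvd_prod_diff:
  fixes f g :: "'i \<Rightarrow> 'a::comm_ring_1"
  assumes "finite S" and "\<And>i. i \<in> S \<Longrightarrow> x dvd f i - g i"
  shows "x dvd prod f S - prod g S"
  using assms
proof (induction S rule: finite_induct)
  case empty then show ?case by simp
next
  case (insert j S)
  have "prod f (insert j S) - prod g (insert j S)
      = f j * (prod f S - prod g S) + (f j - g j) * prod g S"
    using insert.hyps by (simp add: algebra_simps)
  then show ?case using insert by simp
qed

lemma dvd_sum_diff:
  fixes f g :: "'i \<Rightarrow> 'a::comm_ring_1"
  assumes "\<And>i. i \<in> S \<Longrightarrow> x dvd f i - g i"
  shows "x dvd sum f S - sum g S"
  using assms by (simp add: sum_subtractf[symmetric] dvd_sum)

lemma dvd_det_diff:
  fixes A M :: "'a::comm_ring_1 mat"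
  assumes A: "A \<in> carrier_mat k k" and M: "M \<in> carrier_mat k k"
    and entries: "\<And>i j. i < k \<Longrightarrow> j < k \<Longrightarrow> x dvd M $$ (i, j) - A $$ (i, j)"
  shows "x dvd det M - det A"
proof -
  have "x dvd signof p * (\<Prod>i=0..<k. M $$ (i, p i)) - signof p * (\<Prod>i=0..<k. A $$ (i, p i))"
    if p: "p permutes {0..<k}" for p
  proof -
    have "p i < k" if "i < k" for i using p that by (auto simp: permutes_in_image)
    then have "x dvd (\<Prod>i=0..<k. M $$ (i, p i)) - (\<Prod>i=0..<k. A $$ (i, p i))"
      by (intro dvd_prod_diff) (auto intro: entries)
    then show ?thesis by (simp add: right_diff_distrib[symmetric])
  qed
  then show ?thesis
    unfolding det_def'[OF A] det_def'[OF M] by (intro dvd_sum_diff) simp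
qed

lemma det_unitriangular_uu: "det (mat k k (\<lambda>(a, b). uu (int b - int a))) = 1"
proof -
  let ?A = "mat k k (\<lambda>(a, b). uu (int b - int a))"
  have "upper_triangular ?A"
    by (auto simp: upper_triangular_def uu_def)
  then have "det ?A = prod_list (diag_mat ?A)"
    by (rule det_upper_triangular[OF _ mat_carrier])
  also have "diag_mat ?A = replicate k 1"
    by (rule nth_equalityI) (auto simp: diag_mat_def uu_def simp del: upt_Suc replicate_Suc)
  finally show ?thesis by simp
qed

lemma mult_generator_in_gen_ideal: "g \<in> S \<Longrightarrow> c * g \<in> gen_ideal S"
  unfolding gen_ideal_def by (intro CollectI exI[of _ "{g}"] exI[of _ "\<lambda>_. c"]) simp

lemma RR_congruent_one: "Var T dvd RR m n (\<lambda>a. - int a) - 1"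
proof -
  have "Var T dvd RR m n (\<lambda>a. - int a) - det (mat (m + 1) (m + 1) (\<lambda>(a, b). uu (int b - int a)))"
    unfolding RR_def
    by (intro dvd_det_diff[where k = "m + 1"]) (auto simp: ww_def)
  then show ?thesis by (simp only: det_unitriangular_uu)
qed

theorem mainTheorem15:
  fixes m n :: nat
  shows "\<exists>p :: ipoly. Var T * p - 1 \<in> rel_ideal m n"
proof -
  obtain c where c: "RR m n (\<lambda>a. - int a) - 1 = Var T * c"
    using RR_congruent_one[of m n] by (elim dvdE) simp
  have "Var T * (- c) - 1 = (- 1) * RR m n (\<lambda>a. - int a)"
    using c by (simp add: algebra_simps)
  also have "\<dots> \<in> rel_ideal m n"
    unfolding rel_ideal_def by (intro mult_generator_in_gen_ideal) simp
  finally show ?thesis by blast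
qed

end
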